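(* Let $(X,T)$ be a topological dynamical system, $x_0\in X$, $E\subset X$ a clopen set, and $A=\{n\in\mathbb{N}\colon T^nx_0\in E\}$. Equip $X\times X$ with $T\times T$. Let $x_1\in X$ and let $\nu$ be a Borel probability measure on $X\times X$ such that $(x_0,x_1)$ is generic for $\nu$ along some Følner sequence $\Phi=(\Phi_N)$. Assume there exist $\varepsilon>0$ and a sequence of integers $(m_i)$ with $m_i\to\infty$ such that $T^{m_i}x_0\to x_1$ as $i\to\infty$ and $\nu(T^{-m_i}E\times E)\ge\varepsilon$ for every $i$. Then there exist infinite subsets $B,C\subset\mathbb{N}$ with $B+C\subset A$; moreover one can take $B\subset\{m_i\colon i\ge1\}$ and $C\subset\{\ell\in\mathbb{N}\colon T^\ell x_1\in E\}$.
   Context: A topological dynamical system $(X,T)$ is a compact metric space $X$ with a continuous surjection $T\colon X\to X$. Convention: $\mathbb{N}=\{0,1,2,\dots\}$. A Følner sequence is a sequence $\Phi=(\Phi_N)_{N\ge1}$ of intervals of $\mathbb{N}$ whose lengths tend to $\infty$. For a system $(Y,R)$, a point $y\in Y$ and a probability measure $\mu$ on $Y$, $y$ is generic for $\mu$ along $\Phi$ if $\frac{1}{|\Phi_N|}\sum_{n\in\Phi_N}f(R^ny)\to\int f\,d\mu$ as $N\to\infty$ for every continuous $f\colon Y\to\mathbb{C}$. $B+C=\{b+c\colon b\in B,c\in C\}$. *)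

theory Defs
  imports "HOL-Probability.Probability"
begin

definition folner_seq :: "(nat \<Rightarrow> nat set) \<Rightarrow> bool" where
  "folner_seq \<Phi> \<longleftrightarrow> (\<forall>N. \<exists>a b. \<Phi> N = {a..<b}) \<and>
     filterlim (\<lambda>N. card (\<Phi> N)) at_top sequentially"

definition generic_along ::
  "('b::topological_space \<Rightarrow> 'b) \<Rightarrow> 'b \<Rightarrow> 'b measure \<Rightarrow> (nat \<Rightarrow> nat set) \<Rightarrow> bool" where
  "generic_along R y \<mu> \<Phi> \<longleftrightarrow>
     (\<forall>f :: 'b \<Rightarrow> complex. continuous_on UNIV f \<longrightarrow>
        (\<lambda>N. (\<Sum>n\<in>\<Phi> N. f ((R ^^ n) y)) / of_nat (card (\<Phi> N)))
          \<longlonglongrightarrow> integral\<^sup>L \<mu> f)"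

end

theory Submission
  imports Defs
begin

text \<open>Let Z be the set of pairs lying in infinitely many of the sets T^(-m i) E \<times> E; it has
  \<nu>-measure at least \<epsilon>. Finite sets B \<subseteq> {m i} and C with B + C \<subseteq> A are enlarged alternately,
  keeping \<nu>(Z \<inter> (T^(-B) E \<times> X)) > 0, where T^(-B) E is the intersection of the T^(-b) E, b \<in> B.
  To add some b: that set is covered by the T^(-m i) E \<times> E with i large, so one of them meets it
  in positive measure, and b = m i is compatible with C because T^(m i) x0 \<rightarrow> x1, E is open and
  T^c x1 \<in> E for c \<in> C. To add some c: the clopen set T^(-B) E \<times> E has positive measure, so the
  generic point (x0, x1) visits it at arbitrarily large times c.\<close>

lemma continuous_on_indicator_clopen:
  fixes S :: "'b::topological_space set"
  assumes "open S" "closed S"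
  shows "continuous_on UNIV (\<lambda>p. complex_of_real (indicator S p))"
proof -
  have "continuous_on (S \<union> -S) (\<lambda>p. if p \<in> S then (1::complex) else 0)"
    by (rule continuous_on_cases) (use assms in auto)
  moreover have "(\<lambda>p. complex_of_real (indicator S p)) = (\<lambda>p. if p \<in> S then 1 else 0)"
    by (auto simp: indicator_def)
  ultimately show ?thesis
    using Compl_partition by metis
qed

lemma continuous_on_funpow:
  fixes T :: "'b::topological_space \<Rightarrow> 'b"
  assumes "continuous_on UNIV T"
  shows "continuous_on UNIV (T ^^ k)"
proof (induction k)
  case (Suc k)
  have "continuous_on UNIV (T \<circ> (T ^^ k))"
    using continuous_on_compose[OF Suc] assms continuous_on_subset by blast
  then show ?case by simp
qed simp

lemma funpow_pair_map:
  fixes T :: "'b \<Rightarrow> 'b"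
  shows "((\<lambda>(u, v). (T u, T v)) ^^ n) (x, y) = ((T ^^ n) x, (T ^^ n) y)"
  by (induction n) simp_all

lemma folner_density_finite:
  assumes "folner_seq \<Phi>" "finite K"
  shows "(\<lambda>N. real (card (\<Phi> N \<inter> K)) / real (card (\<Phi> N))) \<longlonglongrightarrow> 0"
proof -
  have "filterlim (\<lambda>N. real (card (\<Phi> N))) at_top sequentially"
    using assms(1) filterlim_compose[OF filterlim_real_sequentially]
    unfolding folner_seq_def by blast
  then have upper: "(\<lambda>N. real (card K) / real (card (\<Phi> N))) \<longlonglongrightarrow> 0"
    by (rule tendsto_divide_0[OF tendsto_const filterlim_at_top_imp_at_infinity])
  have "real (card (\<Phi> N \<inter> K)) / real (card (\<Phi> N)) \<le> real (card K) / real (card (\<Phi> N))" for N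
    using card_mono[OF assms(2), of "\<Phi> N \<inter> K"] by (simp add: divide_right_mono)
  then show ?thesis
    by (intro tendsto_sandwich[OF always_eventually always_eventually tendsto_const upper]) simp_all
qed

lemma generic_along_visit_frequency:
  fixes R :: "'b::topological_space \<Rightarrow> 'b"
  assumes "generic_along R y \<mu> \<Phi>" "folner_seq \<Phi>" "sets \<mu> = sets borel"
    and "open S" "closed S"
  shows "(\<lambda>N. real (card (\<Phi> N \<inter> {n. (R ^^ n) y \<in> S})) / real (card (\<Phi> N))) \<longlonglongrightarrow> measure \<mu> S"
proof -
  let ?f = "\<lambda>p. complex_of_real (indicator S p)"
  have finite_\<Phi>: "finite (\<Phi> N)" for N
    using assms(2) unfolding folner_seq_def by (metis finite_atLeastLessThan)
  have "?f p = of_bool (p \<in> S)" for p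
    by (cases "p \<in> S") auto
  then have "(\<Sum>n\<in>\<Phi> N. ?f ((R ^^ n) y)) / of_nat (card (\<Phi> N))
      = of_real (real (card (\<Phi> N \<inter> {n. (R ^^ n) y \<in> S})) / real (card (\<Phi> N)))" for N
    using finite_\<Phi>[of N] by simp
  moreover have "(\<lambda>N. (\<Sum>n\<in>\<Phi> N. ?f ((R ^^ n) y)) / of_nat (card (\<Phi> N))) \<longlonglongrightarrow> integral\<^sup>L \<mu> ?f"
    using assms(1) continuous_on_indicator_clopen[OF assms(4,5)]
    unfolding generic_along_def by blast
  moreover have "integral\<^sup>L \<mu> ?f = of_real (measure \<mu> S)"
    using sets_eq_imp_space_eq[OF assms(3)] by simp
  ultimately show ?thesis
    by (simp only: tendsto_of_real_iff)
qed

lemma generic_along_visits_infinite: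
  fixes R :: "'b::topological_space \<Rightarrow> 'b"
  assumes "generic_along R y \<mu> \<Phi>" "folner_seq \<Phi>" "sets \<mu> = sets borel"
    and "open S" "closed S" "measure \<mu> S > 0"
  shows "infinite {n. (R ^^ n) y \<in> S}"
proof
  assume "finite {n. (R ^^ n) y \<in> S}"
  from LIMSEQ_unique[OF generic_along_visit_frequency[OF assms(1-5)]
      folner_density_finite[OF assms(2) this]]
  show False using assms(6) by simp
qed

lemma (in finite_measure) measure_limsup_ge:
  assumes "\<And>i. A i \<in> sets M" "\<And>i. c \<le> measure M (A i)"
  shows "c \<le> measure M (limsup A)"
proof -
  let ?U = "\<lambda>N. \<Union>i\<in>{N..}. A i"
  have "decseq ?U"
    by (auto simp: decseq_def intro: order_trans)
  then have "(\<lambda>N. measure M (?U N)) \<longlonglongrightarrow> measure M (\<Inter>N. ?U N)"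
    using assms(1) by (intro finite_Lim_measure_decseq) auto
  moreover have "c \<le> measure M (?U N)" for N
    using assms finite_measure_mono[of "A N" "?U N"] by (auto intro: order_trans)
  ultimately show ?thesis
    unfolding limsup_INF_SUP by (intro LIMSEQ_le_const) auto
qed

lemma (in finite_measure) measure_Int_pos_of_cover:
  assumes "Y \<in> sets M" "\<And>i. i \<in> I \<Longrightarrow> A i \<in> sets M" "countable I"
    and "Y \<subseteq> (\<Union>i\<in>I. A i)" "measure M Y > 0"
  shows "\<exists>i\<in>I. measure M (Y \<inter> A i) > 0"
proof (rule ccontr)
  assume "\<not> ?thesis"
  then have "measure M (Y \<inter> A i) = 0" if "i \<in> I" for i
    using that by (meson antisym measure_nonneg not_less)
  then have "Y \<inter> A i \<in> null_sets M" if "i \<in> I" for i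
    using that assms(1,2) by (auto simp: null_sets_def emeasure_eq_measure)
  then have "(\<Union>i\<in>I. Y \<inter> A i) \<in> null_sets M"
    using assms(3) by (intro null_sets_UN') auto
  moreover have "Y \<subseteq> (\<Union>i\<in>I. Y \<inter> A i)"
    using assms(4) by auto
  ultimately have "Y \<in> null_sets M"
    using assms(1) null_sets_subset by blast
  with assms(5) show False
    by (simp add: null_sets_def emeasure_eq_measure)
qed

lemma infinite_sets_by_finite_extensions:
  fixes P :: "nat set \<Rightarrow> nat set \<Rightarrow> bool"
  assumes "P {} {}"
    and extend: "\<And>F G n. P F G \<Longrightarrow>
      \<exists>F' G'. P F' G' \<and> F \<subseteq> F' \<and> G \<subseteq> G' \<and> (\<exists>b\<in>F'. n < b) \<and> (\<exists>c\<in>G'. n < c)"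
  shows "\<exists>B C. infinite B \<and> infinite C \<and> (\<forall>b\<in>B. \<forall>c\<in>C. \<exists>F G. P F G \<and> b \<in> F \<and> c \<in> G)"
proof -
  let ?Q = "\<lambda>k p q. fst p \<subseteq> fst q \<and> snd p \<subseteq> snd q \<and> (\<exists>b\<in>fst q. k < b) \<and> (\<exists>c\<in>snd q. k < c)"
  have step: "\<exists>q. P (fst q) (snd q) \<and> ?Q k p q" if "P (fst p) (snd p)" for k p
    using extend[OF that, of k] by auto
  have "\<exists>s. \<forall>k. P (fst (s k)) (snd (s k)) \<and> ?Q k (s k) (s (Suc k))"
    by (rule dependent_nat_choice) (use assms(1) step in auto)
  then obtain s where s: "\<And>k. P (fst (s k)) (snd (s k))" and grow: "\<And>k. ?Q k (s k) (s (Suc k))"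
    by blast
  define B where "B = (\<Union>k. fst (s k))"
  define C where "C = (\<Union>k. snd (s k))"
  have "incseq (\<lambda>k. fst (s k))" "incseq (\<lambda>k. snd (s k))"
    using grow by (simp_all add: incseq_SucI)
  then have "b \<in> fst (s (max k j)) \<and> c \<in> snd (s (max k j))"
    if "b \<in> fst (s k)" "c \<in> snd (s j)" for b c k j
    using that by (meson incseqD max.cobounded1 max.cobounded2 subsetD)
  then have "\<forall>b\<in>B. \<forall>c\<in>C. \<exists>F G. P F G \<and> b \<in> F \<and> c \<in> G"
    unfolding B_def C_def using s by blast
  moreover have "infinite B" "infinite C"
    using grow unfolding B_def C_def infinite_nat_iff_unbounded by (meson UN_I UNIV_I)+
  ultimately show ?thesis
    by blast
qed

locale return_time_setting = prob_space \<nu>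
  for \<nu> :: "('a::metric_space \<times> 'a) measure" +
  fixes T :: "'a \<Rightarrow> 'a" and x0 x1 :: 'a and E :: "'a set"
    and \<Phi> :: "nat \<Rightarrow> nat set" and m :: "nat \<Rightarrow> nat" and \<epsilon> :: real
  assumes continuous_T: "continuous_on UNIV T"
    and open_E: "open E" and closed_E: "closed E"
    and sets_\<nu>: "sets \<nu> = sets borel"
    and folner_\<Phi>: "folner_seq \<Phi>"
    and generic: "generic_along (\<lambda>(u, v). (T u, T v)) (x0, x1) \<nu> \<Phi>"
    and \<epsilon>_pos: "\<epsilon> > 0"
    and m_to_top: "filterlim m at_top sequentially"
    and orbit_m_tendsto: "(\<lambda>i. (T ^^ m i) x0) \<longlonglongrightarrow> x1"
    and measure_return_pairs_ge: "\<And>i. \<epsilon> \<le> measure \<nu> ((T ^^ m i) -` E \<times> E)"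
begin

definition return_pairs :: "nat \<Rightarrow> ('a \<times> 'a) set" where
  "return_pairs i = (T ^^ m i) -` E \<times> E"

definition common_return_set :: "nat set \<Rightarrow> 'a set" where
  "common_return_set F = (\<Inter>b\<in>F. (T ^^ b) -` E)"

definition surviving_pairs :: "nat set \<Rightarrow> ('a \<times> 'a) set" where
  "surviving_pairs F = limsup return_pairs \<inter> common_return_set F \<times> UNIV"

definition admissible :: "nat set \<Rightarrow> nat set \<Rightarrow> bool" where
  "admissible F G \<longleftrightarrow> finite F \<and> finite G \<and> F \<subseteq> range m \<and> G \<subseteq> {l. (T ^^ l) x1 \<in> E} \<and>
     (\<forall>b\<in>F. \<forall>c\<in>G. (T ^^ (b + c)) x0 \<in> E) \<and> 0 < measure \<nu> (surviving_pairs F)"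

lemma closed_vimage_funpow_E: "closed ((T ^^ k) -` E)"
  using closed_vimage[OF closed_E continuous_on_funpow[OF continuous_T]] .

lemma open_vimage_funpow_E: "open ((T ^^ k) -` E)"
  using open_vimage[OF open_E continuous_on_funpow[OF continuous_T]] .

lemma closed_common_return_set: "closed (common_return_set F)"
  unfolding common_return_set_def by (intro closed_INT ballI closed_vimage_funpow_E)

lemma open_common_return_set: "finite F \<Longrightarrow> open (common_return_set F)"
  unfolding common_return_set_def by (intro open_INT ballI open_vimage_funpow_E)

lemma sets_closed: "closed S \<Longrightarrow> S \<in> sets \<nu>"
  by (simp add: sets_\<nu> borel_closed)

lemma sets_return_pairs: "return_pairs i \<in> sets \<nu>"
  unfolding return_pairs_def
  by (intro sets_closed closed_Times closed_vimage_funpow_E closed_E)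

lemma sets_limsup_return_pairs: "limsup return_pairs \<in> sets \<nu>"
  by (intro measurable_limsup sets_return_pairs)

lemma sets_surviving_pairs: "surviving_pairs F \<in> sets \<nu>"
  unfolding surviving_pairs_def
  by (intro sets.Int sets_limsup_return_pairs sets_closed closed_Times
      closed_common_return_set closed_UNIV)

lemma admissible_empty: "admissible {} {}"
proof -
  have "\<epsilon> \<le> measure \<nu> (limsup return_pairs)"
    using measure_return_pairs_ge
    by (intro measure_limsup_ge sets_return_pairs) (simp add: return_pairs_def)
  then show ?thesis
    using \<epsilon>_pos by (simp add: admissible_def surviving_pairs_def common_return_set_def)
qed

lemma admissible_insert_left:
  assumes "admissible F G"
  shows "\<exists>b>n. admissible (insert b F) G"
proof -
  have orbit_in_E: "\<forall>\<^sub>F i in sequentially. (T ^^ c) ((T ^^ m i) x0) \<in> E" if "c \<in> G" for c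
  proof -
    have "(\<lambda>i. (T ^^ c) ((T ^^ m i) x0)) \<longlonglongrightarrow> (T ^^ c) x1"
      by (intro continuous_on_tendsto_compose[OF continuous_on_funpow[OF continuous_T]
          orbit_m_tendsto]) auto
    moreover have "(T ^^ c) x1 \<in> E"
      using assms that by (auto simp: admissible_def)
    ultimately show ?thesis
      using topological_tendstoD open_E by blast
  qed
  have "finite G"
    using assms by (simp add: admissible_def)
  then have "\<forall>\<^sub>F i in sequentially. n < m i \<and> (\<forall>c\<in>G. (T ^^ c) ((T ^^ m i) x0) \<in> E)"
    using orbit_in_E
    by (intro eventually_conj eventually_compose_filterlim[OF eventually_gt_at_top m_to_top]
        eventually_ball_finite ballI)
  then obtain N where N: "\<And>i. N \<le> i \<Longrightarrow> n < m i \<and> (\<forall>c\<in>G. (T ^^ c) ((T ^^ m i) x0) \<in> E)"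
    unfolding eventually_sequentially by blast
  have "surviving_pairs F \<subseteq> (\<Union>i\<in>{N..}. return_pairs i)"
    unfolding surviving_pairs_def limsup_INF_SUP by auto
  then have "\<exists>i\<in>{N..}. 0 < measure \<nu> (surviving_pairs F \<inter> return_pairs i)"
    using assms
    by (intro measure_Int_pos_of_cover sets_surviving_pairs sets_return_pairs)
      (auto simp: admissible_def)
  then obtain i where "N \<le> i" and pos: "0 < measure \<nu> (surviving_pairs F \<inter> return_pairs i)"
    by auto
  have "surviving_pairs F \<inter> return_pairs i \<subseteq> surviving_pairs (insert (m i) F)"
    by (auto simp: surviving_pairs_def return_pairs_def common_return_set_def)
  then have "0 < measure \<nu> (surviving_pairs (insert (m i) F))"
    using pos finite_measure_mono[OF _ sets_surviving_pairs] by (meson less_le_trans)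
  moreover have "(T ^^ (m i + c)) x0 \<in> E" if "c \<in> G" for c
    using N[OF \<open>N \<le> i\<close>] that by (simp add: funpow_add add.commute[of "m i"])
  ultimately have "admissible (insert (m i) F) G"
    using assms by (auto simp: admissible_def)
  then show ?thesis
    using N[OF \<open>N \<le> i\<close>] by blast
qed

lemma admissible_insert_right:
  assumes "admissible F G"
  shows "\<exists>c>n. admissible F (insert c G)"
proof -
  let ?S = "common_return_set F \<times> E"
  have "surviving_pairs F \<subseteq> ?S"
    unfolding surviving_pairs_def limsup_INF_SUP return_pairs_def by auto
  then have "0 < measure \<nu> ?S"
    using assms finite_measure_mono[OF _ sets_closed[OF closed_Times[OF
          closed_common_return_set closed_E]]]
    by (auto simp: admissible_def intro: less_le_trans)
  then have "infinite {k. ((\<lambda>(u, v). (T u, T v)) ^^ k) (x0, x1) \<in> ?S}"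
    using assms by (intro generic_along_visits_infinite[OF generic folner_\<Phi> sets_\<nu>]
        open_Times open_common_return_set open_E closed_Times closed_common_return_set closed_E)
      (auto simp: admissible_def)
  then obtain c where "n < c" and c: "((T ^^ c) x0, (T ^^ c) x1) \<in> ?S"
    unfolding funpow_pair_map infinite_nat_iff_unbounded by blast
  then have "(T ^^ (b + c)) x0 \<in> E" if "b \<in> F" for b
    using that by (simp add: common_return_set_def funpow_add)
  with c assms have "admissible F (insert c G)"
    by (auto simp: admissible_def)
  with \<open>n < c\<close> show ?thesis
    by blast
qed

lemma admissible_extend:
  assumes "admissible F G"
  shows "\<exists>F' G'. admissible F' G' \<and> F \<subseteq> F' \<and> G \<subseteq> G' \<and> (\<exists>b\<in>F'. n < b) \<and> (\<exists>c\<in>G'. n < c)"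
proof -
  obtain b where "n < b" and b: "admissible (insert b F) G"
    using admissible_insert_left[OF assms] by blast
  moreover obtain c where "n < c" and "admissible (insert b F) (insert c G)"
    using admissible_insert_right[OF b] by blast
  ultimately show ?thesis
    by (intro exI[of _ "insert b F"] exI[of _ "insert c G"]) auto
qed

lemma sumset_in_return_times:
  "\<exists>B C :: nat set. infinite B \<and> infinite C \<and>
     (\<forall>b\<in>B. \<forall>c\<in>C. b + c \<in> {n. (T ^^ n) x0 \<in> E}) \<and>
     B \<subseteq> range m \<and> C \<subseteq> {l. (T ^^ l) x1 \<in> E}"
proof -
  obtain B C where "infinite B" "infinite C"
    and BC: "\<forall>b\<in>B. \<forall>c\<in>C. \<exists>F G. admissible F G \<and> b \<in> F \<and> c \<in> G"
    using infinite_sets_by_finite_extensions[OF admissible_empty admissible_extend] by blast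
  obtain b0 c0 where "b0 \<in> B" "c0 \<in> C"
    using infinite_imp_nonempty[OF \<open>infinite B\<close>] infinite_imp_nonempty[OF \<open>infinite C\<close>] by blast
  have "b + c \<in> {n. (T ^^ n) x0 \<in> E}" if "b \<in> B" "c \<in> C" for b c
    using BC that by (auto simp: admissible_def)
  moreover have "B \<subseteq> range m"
    using BC \<open>c0 \<in> C\<close> by (force simp: admissible_def)
  moreover have "C \<subseteq> {l. (T ^^ l) x1 \<in> E}"
    using BC \<open>b0 \<in> B\<close> by (force simp: admissible_def)
  ultimately show ?thesis
    using \<open>infinite B\<close> \<open>infinite C\<close> by blast
qed
end

theorem theorem2:
  fixes T :: "'a::metric_space \<Rightarrow> 'a"
    and x0 x1 :: 'a and E :: "'a set"
    and \<nu> :: "('a \<times> 'a) measure"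
    and \<Phi> :: "nat \<Rightarrow> nat set"
    and m :: "nat \<Rightarrow> nat"
    and \<epsilon> :: real
  assumes cpt: "compact (UNIV :: 'a set)"
    and contT: "continuous_on UNIV T"
    and surjT: "surj T"
    and E_open: "open E" and E_closed: "closed E"
    and \<nu>_borel: "sets \<nu> = sets borel"
    and \<nu>_prob: "prob_space \<nu>"
    and fol: "folner_seq \<Phi>"
    and gen: "generic_along (\<lambda>(u, v). (T u, T v)) (x0, x1) \<nu> \<Phi>"
    and eps: "\<epsilon> > 0"
    and m_inf: "filterlim m at_top sequentially"
    and m_conv: "(\<lambda>i. (T ^^ m i) x0) \<longlonglongrightarrow> x1"
    and m_meas: "\<And>i. measure \<nu> (((T ^^ m i) -` E) \<times> E) \<ge> \<epsilon>"
  shows "\<exists>B C :: nat set. infinite B \<and> infinite C \<and>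
           (\<forall>b\<in>B. \<forall>c\<in>C. b + c \<in> {n. (T ^^ n) x0 \<in> E}) \<and>
           B \<subseteq> range m \<and> C \<subseteq> {l. (T ^^ l) x1 \<in> E}"
proof -
  interpret return_time_setting \<nu> T x0 x1 E \<Phi> m \<epsilon>
    using \<nu>_prob contT E_open E_closed \<nu>_borel fol gen eps m_inf m_conv m_meas
    by (simp add: return_time_setting_def return_time_setting_axioms_def)
  show ?thesis
    by (rule sumset_in_return_times)
qed

end
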